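(* Let $\lambda\ne0$, let $r>1$, and let $T_1$ be the single-vertex-bag weighted threshold matrix on $v_1,\dots,v_r$ with vertex weights $p^{(1)}_i=0$ if $i\equiv1,2\pmod4$ and $p^{(1)}_i=\lambda$ if $i\equiv0,3\pmod4$ (edge weights $\epsilon^{(1)}_{\ell,j}$ to be chosen). Then for every $i\in\{1,\dots,r-1\}$ the following holds: for every choice of nonzero reals $\epsilon^{(1)}_{\ell,j}$ with $i<\ell<j\le r$, $j$ even, there exist nonzero reals $\epsilon^{(1)}_{\ell,j}$ for all $\ell\le i$ and all even $j>\ell$ ($j\le r$), and single-vertex-bag weighted threshold matrices $T_2,\dots,T_{i+1}$, where $T_m$ lives on $v_m,\dots,v_r$ with vertex weights $p^{(m)}_s$ and edge weights $\epsilon^{(m)}_{s,j}$, such that for every $k\in\{1,\dots,i\}$ (with the convention $\epsilon^{(k)}_{k,k+1}=0$ when $k+1$ is odd): (ii) $\epsilon^{(k)}_{k,j}=\epsilon^{(k)}_{k+1,j}$ for all even $j$ with $k+1<j\le r$; (iii) if $k+1$ is even and $q\in\{0,2\}$ satisfies $k+1\equiv q\pmod 4$, then $\epsilon^{(k)}_{k,k+1}=(q-1)\lambda$; (iv) $p^{(k+1)}_{k+1}=p^{(k)}_k+\epsilon^{(k)}_{k,k+1}$; $\epsilon^{(k+1)}_{k+1,j}=\sqrt2\,\epsilon^{(k)}_{k+1,j}$ for even $j$ with $k+1<j\le r$; $p^{(k+1)}_z=p^{(k)}_z=p^{(1)}_z$ for $k+1<z\le r$; and $\epsilon^{(k+1)}_{z,j}=\epsilon^{(k)}_{z,j}=\epsilon^{(1)}_{z,j}$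 for $k+1<z<j\le r$, $j$ even; (v) $\mathrm{Spec}(T_k)=\mathrm{Spec}(T_{k+1})\cup\{x_k\}$, where $x_k=p^{(k)}_k-\epsilon^{(k)}_{k,k+1}$ (so $x_k=p^{(k)}_k$ if $k$ is even), and $x_k=0$ if $k\equiv0$, $x_k=-\lambda$ if $k\equiv1$, $x_k=\lambda$ if $k\equiv2$, $x_k=2\lambda$ if $k\equiv3\pmod4$.
   Context: A single-vertex-bag weighted threshold matrix on $v_k,\dots,v_r$ is the real symmetric matrix indexed by $v_k,\dots,v_r$ with diagonal entries $p_i$ (the vertex weights) and, for $i<j$, entry $\epsilon_{i,j}\ne 0$ at positions $(v_i,v_j),(v_j,v_i)$ if $j$ is even and entry $0$ if $j$ is odd (so $v_i$ and $v_j$, $i<j$, are adjacent iff $j$ is even). $\mathrm{Spec}$ denotes the multiset of eigenvalues, and $\cup$ of multisets adds multiplicities. *)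

theory Defs
  imports "Jordan_Normal_Form.Char_Poly" "HOL-Computational_Algebra.Polynomial"
begin

text \<open>Row/column index a (0 \<le> a \<le> r-k) corresponds to vertex v_(k+a).\<close>
definition svb_mat :: "nat \<Rightarrow> nat \<Rightarrow> (nat \<Rightarrow> real) \<Rightarrow> (nat \<Rightarrow> nat \<Rightarrow> real) \<Rightarrow> real mat" where
  "svb_mat k r p e = mat (Suc (r - k)) (Suc (r - k)) (\<lambda>(a, b).
     let i = k + a; j = k + b in
     if i = j then p i
     else if i < j then (if even j then e i j else 0)
     else (if even i then e j i else 0))"

definition svb_valid :: "nat \<Rightarrow> nat \<Rightarrow> (nat \<Rightarrow> nat \<Rightarrow> real) \<Rightarrow> bool" where
  "svb_valid k r e \<longleftrightarrow> (\<forall>i j. k \<le> i \<and> i < j \<and> j \<le> r \<and> even j \<longrightarrow> e i j \<noteq> 0)"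

definition Spec :: "real mat \<Rightarrow> complex multiset" where
  "Spec A = proots (char_poly (map_mat complex_of_real A))"

end

theory Submission
  imports Defs
begin

(* Vertices v_k and v_(k+1) of T_k are twins: they have equal weights, identical edges to all
   later vertices, and are joined by an edge of weight eps_(k,k+1) (0 if k + 1 is odd).
   Rotating their two coordinates by pi/4 splits off the eigenvalue p_k - eps_(k,k+1) and leaves
   the threshold matrix on v_(k+1), ..., v_r in which v_(k+1) has weight p_k + eps_(k,k+1) and
   sqrt 2 times its old edges.  With the base weights lam, 0, 0, lam repeating modulo 4 and
   eps_(k,k+1) = -lam or lam as (iii) demands, the merged vertex again has the weight of its
   successor, so the reduction can be repeated.  The edges of v_1, ..., v_i are obtained from the
   prescribed row of v_(i+1) and the forced twin edges by dividing by powers of sqrt 2. *)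

lemma sum_atLeast0_lessThan_eq_first_two:
  fixes g :: "nat \<Rightarrow> 'a::comm_monoid_add"
  assumes "2 \<le> N" and "\<And>l. 2 \<le> l \<Longrightarrow> l < N \<Longrightarrow> g l = 0"
  shows "sum g {0..<N} = g 0 + g 1"
proof -
  have "sum g {0..<N} = sum g {0, 1}"
    using assms by (intro sum.mono_neutral_right) auto
  then show ?thesis by simp
qed

(* With t = 1 / sqrt 2 this is the rotation by pi/4 in the plane of the first two coordinates;
   it separates the antisymmetric and the symmetric combination of two twin vertices. *)
definition twin_rotation_mat :: "nat \<Rightarrow> 'a::field \<Rightarrow> 'a mat" where
  "twin_rotation_mat N t = mat N N (\<lambda>(i, j).
     if i < 2 \<and> j < 2 then (if i = 1 \<and> j = 0 then - t else t) else if i = j then 1 else 0)"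

lemma twin_rotation_mat_carrier [simp]: "twin_rotation_mat N t \<in> carrier_mat N N"
  by (simp add: twin_rotation_mat_def)

lemma index_mult_twin_rotation_mat:
  assumes "M \<in> carrier_mat N N" and "2 \<le> N" and "i < N" and "j < N"
  shows "(M * twin_rotation_mat N t) $$ (i, j) =
    (if j = 0 then t * (M $$ (i, 0) - M $$ (i, 1))
     else if j = 1 then t * (M $$ (i, 0) + M $$ (i, 1)) else M $$ (i, j))"
  using assms
  by (auto simp: scalar_prod_def twin_rotation_mat_def sum_atLeast0_lessThan_eq_first_two
      if_distrib[of "(*) _"] ring_distribs cong: if_cong)

lemma index_twin_rotation_mat_mult:
  assumes "M \<in> carrier_mat N N" and "2 \<le> N" and "i < N" and "j < N"
  shows "(twin_rotation_mat N t * M) $$ (i, j) =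
    (if i = 0 then t * (M $$ (0, j) + M $$ (1, j))
     else if i = 1 then t * (M $$ (1, j) - M $$ (0, j)) else M $$ (i, j))"
  using assms
  by (auto simp: scalar_prod_def twin_rotation_mat_def sum_atLeast0_lessThan_eq_first_two
      if_distrib[of "\<lambda>x. x * _"] ring_distribs cong: if_cong)

lemma twin_rotation_mat_orthogonal:
  assumes "2 \<le> N" and "t * t + t * t = 1"
  shows "twin_rotation_mat N t * transpose_mat (twin_rotation_mat N t) = 1\<^sub>m N"
    and "transpose_mat (twin_rotation_mat N t) * twin_rotation_mat N t = 1\<^sub>m N"
proof -
  show "twin_rotation_mat N t * transpose_mat (twin_rotation_mat N t) = 1\<^sub>m N"
  proof (rule eq_matI)
    fix i j assume "i < dim_row (1\<^sub>m N)" and "j < dim_col (1\<^sub>m N)"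
    then show "(twin_rotation_mat N t * transpose_mat (twin_rotation_mat N t)) $$ (i, j) =
      1\<^sub>m N $$ (i, j)"
      using assms
      by (subst index_twin_rotation_mat_mult) (auto simp: twin_rotation_mat_def algebra_simps)
  qed (simp_all add: twin_rotation_mat_def)
  show "transpose_mat (twin_rotation_mat N t) * twin_rotation_mat N t = 1\<^sub>m N"
  proof (rule eq_matI)
    fix i j assume "i < dim_row (1\<^sub>m N)" and "j < dim_col (1\<^sub>m N)"
    then show "(transpose_mat (twin_rotation_mat N t) * twin_rotation_mat N t) $$ (i, j) =
      1\<^sub>m N $$ (i, j)"
      using assms
      by (subst index_mult_twin_rotation_mat) (auto simp: twin_rotation_mat_def algebra_simps)
  qed (simp_all add: twin_rotation_mat_def)
qed

lemma char_poly_mat_1x1: "char_poly (mat 1 1 (\<lambda>_. x)) = [:- (x::'a::comm_ring_1), 1:]"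
proof -
  have "char_poly (mat 1 1 (\<lambda>_. x)) = (\<Prod>a \<leftarrow> diag_mat (mat 1 1 (\<lambda>_. x)). [:- a, 1:])"
    by (rule char_poly_upper_triangular[of _ 1]) (auto simp: upper_triangular_def)
  then show ?thesis by (simp add: diag_mat_def)
qed

locale twin_vertices =
  fixes A B :: "'a::field_char_0 mat" and n :: nat and a c s :: 'a
  assumes A_carrier: "A \<in> carrier_mat (n + 2) (n + 2)"
    and B_carrier: "B \<in> carrier_mat (n + 1) (n + 1)"
    and s_square: "s * s = 2"
    and A_00: "A $$ (0, 0) = a" and A_11: "A $$ (1, 1) = a"
    and A_01: "A $$ (0, 1) = c" and A_10: "A $$ (1, 0) = c"
    and A_twin_row: "\<And>j. 2 \<le> j \<Longrightarrow> j < n + 2 \<Longrightarrow> A $$ (1, j) = A $$ (0, j)"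
    and A_twin_col0: "\<And>j. 2 \<le> j \<Longrightarrow> j < n + 2 \<Longrightarrow> A $$ (j, 0) = A $$ (0, j)"
    and A_twin_col1: "\<And>j. 2 \<le> j \<Longrightarrow> j < n + 2 \<Longrightarrow> A $$ (j, 1) = A $$ (0, j)"
    and B_00: "B $$ (0, 0) = a + c"
    and B_row0: "\<And>j. 2 \<le> j \<Longrightarrow> j < n + 2 \<Longrightarrow> B $$ (0, j - 1) = s * A $$ (0, j)"
    and B_col0: "\<And>j. 2 \<le> j \<Longrightarrow> j < n + 2 \<Longrightarrow> B $$ (j - 1, 0) = s * A $$ (0, j)"
    and B_tail: "\<And>i j. 2 \<le> i \<Longrightarrow> i < n + 2 \<Longrightarrow> 2 \<le> j \<Longrightarrow> j < n + 2 \<Longrightarrow>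
      B $$ (i - 1, j - 1) = A $$ (i, j)"
begin

definition rotation :: "'a mat" where
  "rotation = twin_rotation_mat (n + 2) (inverse s)"

definition reduced :: "'a mat" where
  "reduced = four_block_mat (mat 1 1 (\<lambda>_. a - c)) (0\<^sub>m 1 (n + 1)) (0\<^sub>m (n + 1) 1) B"

lemma reduced_carrier: "reduced \<in> carrier_mat (n + 2) (n + 2)"
  using four_block_carrier_mat[OF _ B_carrier, of "mat 1 1 (\<lambda>_. a - c)" 1 1]
  by (simp add: reduced_def)

lemma index_reduced:
  assumes "i < n + 2" and "j < n + 2"
  shows "reduced $$ (i, j) =
    (if i = 0 then (if j = 0 then a - c else 0) else if j = 0 then 0 else B $$ (i - 1, j - 1))"
  using assms B_carrier by (simp add: reduced_def)

lemma mult_rotation_eq: "A * rotation = rotation * reduced"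
proof (rule eq_matI)
  fix i j assume "i < dim_row (rotation * reduced)" and "j < dim_col (rotation * reduced)"
  then have i: "i < n + 2" and j: "j < n + 2"
    using reduced_carrier by (simp_all add: rotation_def twin_rotation_mat_def)
  define t where "t = inverse s"
  have "s \<noteq> 0" using s_square by auto
  then have t: "t * (s * x) = x" "t * 2 = s" for x
    using s_square by (simp_all add: t_def field_simps flip: mult_2)
  have L: "(A * rotation) $$ (i, j) =
    (if j = 0 then t * (A $$ (i, 0) - A $$ (i, 1))
     else if j = 1 then t * (A $$ (i, 0) + A $$ (i, 1)) else A $$ (i, j))"
    using A_carrier i j by (simp add: rotation_def t_def index_mult_twin_rotation_mat)
  have R: "(rotation * reduced) $$ (i, j) =
    (if i = 0 then t * (reduced $$ (0, j) + reduced $$ (1, j))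
     else if i = 1 then t * (reduced $$ (1, j) - reduced $$ (0, j)) else reduced $$ (i, j))"
    using reduced_carrier i j by (simp add: rotation_def t_def index_twin_rotation_mat_mult)
  have reduced_0: "reduced $$ (0, j) = (if j = 0 then a - c else 0)"
    and reduced_1: "reduced $$ (1, j) = (if j = 0 then 0 else B $$ (0, j - 1))"
    using j by (simp_all add: index_reduced)
  consider "j = 0" | "j = 1" | "2 \<le> j" by linarith
  then show "(A * rotation) $$ (i, j) = (rotation * reduced) $$ (i, j)"
  proof cases
    case 1
    show ?thesis unfolding L R reduced_0 reduced_1
      using 1 A_00 A_01 A_10 A_11 A_twin_col0[OF _ i] A_twin_col1[OF _ i] i
      by (simp add: index_reduced algebra_simps)
  next
    case 2
    show ?thesis unfolding L R reduced_0 reduced_1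
      using 2 A_00 A_01 A_10 A_11 B_00 A_twin_col0[OF _ i] A_twin_col1[OF _ i] B_col0[OF _ i] i
      by (auto simp: index_reduced t)
  next
    case 3
    show ?thesis unfolding L R reduced_0 reduced_1
      using 3 B_row0[OF 3 j] A_twin_row[OF 3 j] B_tail[OF _ i 3 j] i j
      by (auto simp: index_reduced t)
  qed
qed (use A_carrier B_carrier in \<open>simp_all add: rotation_def reduced_def twin_rotation_mat_def\<close>)

lemma similar_mat_reduced: "similar_mat A reduced"
proof -
  let ?Q = "transpose_mat rotation"
  have "inverse s * inverse s + inverse s * inverse s = 1"
    using s_square by (simp add: field_simps flip: mult_2)
  then have inverse: "rotation * ?Q = 1\<^sub>m (n + 2)" "?Q * rotation = 1\<^sub>m (n + 2)"
    unfolding rotation_def by (simp_all add: twin_rotation_mat_orthogonal)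
  have carrier: "rotation \<in> carrier_mat (n + 2) (n + 2)" "?Q \<in> carrier_mat (n + 2) (n + 2)"
    by (simp_all add: rotation_def)
  have "A = A * (rotation * ?Q)"
    using A_carrier by (simp add: inverse)
  also have "\<dots> = rotation * reduced * ?Q"
    using A_carrier carrier reduced_carrier by (simp flip: assoc_mult_mat add: mult_rotation_eq)
  finally show ?thesis
    using A_carrier carrier reduced_carrier inverse
    by (intro similar_matI[where P = rotation and Q = "transpose_mat rotation"]) auto
qed

lemma char_poly_eq: "char_poly A = [:- (a - c), 1:] * char_poly B"
proof -
  have "char_poly A = char_poly reduced"
    by (rule char_poly_similar[OF similar_mat_reduced])
  also have "\<dots> = char_poly (mat 1 1 (\<lambda>_. a - c)) * char_poly B"
    unfolding reduced_def using B_carrier by (intro char_poly_four_block_zeros_col) auto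
  finally show ?thesis unfolding char_poly_mat_1x1 .
qed

lemma proots_char_poly_eq: "proots (char_poly A) = proots (char_poly B) + {# a - c #}"
proof -
  have "char_poly B \<noteq> 0"
    using degree_monic_char_poly[OF B_carrier] by auto
  then show ?thesis
    by (simp add: char_poly_eq proots_mult del: mult_pCons_left)
qed

end

lemma svb_mat_carrier: "svb_mat k r P E \<in> carrier_mat (Suc (r - k)) (Suc (r - k))"
  by (simp add: svb_mat_def)

lemma index_svb_mat:
  assumes "a < Suc (r - k)" and "b < Suc (r - k)"
  shows "svb_mat k r P E $$ (a, b) =
    (if a = b then P (k + a)
     else if a < b then (if even (k + b) then E (k + a) (k + b) else 0)
     else (if even (k + a) then E (k + b) (k + a) else 0))"
  using assms by (simp add: svb_mat_def Let_def)

lemma Spec_svb_mat_twin_reduction: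
  fixes k r :: nat and P P' :: "nat \<Rightarrow> real" and E E' :: "nat \<Rightarrow> nat \<Rightarrow> real"
  defines "c \<equiv> if even (k + 1) then E k (k + 1) else 0"
  assumes "k < r"
    and twin_weight: "P (k + 1) = P k"
    and twin_edges: "\<And>j. even j \<Longrightarrow> k + 1 < j \<Longrightarrow> j \<le> r \<Longrightarrow> E k j = E (k + 1) j"
    and merged_weight: "P' (k + 1) = P k + c"
    and merged_edges: "\<And>j. even j \<Longrightarrow> k + 1 < j \<Longrightarrow> j \<le> r \<Longrightarrow> E' (k + 1) j = sqrt 2 * E (k + 1) j"
    and weights_unchanged: "\<And>z. k + 1 < z \<Longrightarrow> z \<le> r \<Longrightarrow> P' z = P z"
    and edges_unchanged: "\<And>z j. k + 1 < z \<Longrightarrow> z < j \<Longrightarrow> j \<le> r \<Longrightarrow> even j \<Longrightarrow> E' z j = E z j"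
  shows "Spec (svb_mat k r P E) = Spec (svb_mat (k + 1) r P' E') + {# complex_of_real (P k - c) #}"
proof -
  define n where "n = r - k - 1"
  define A where "A = map_mat complex_of_real (svb_mat k r P E)"
  define B where "B = map_mat complex_of_real (svb_mat (k + 1) r P' E')"
  have dims: "Suc (r - k) = n + 2" "Suc (r - (k + 1)) = n + 1"
    using \<open>k < r\<close> by (simp_all add: n_def)
  have A: "A $$ (a, b) = complex_of_real (svb_mat k r P E $$ (a, b))"
    if "a < n + 2" "b < n + 2" for a b
    using that dims by (simp add: A_def svb_mat_def)
  have B: "B $$ (a, b) = complex_of_real (svb_mat (k + 1) r P' E' $$ (a, b))"
    if "a < n + 1" "b < n + 1" for a b
    using that dims by (simp add: B_def svb_mat_def)
  interpret twin_vertices A B n "complex_of_real (P k)" "complex_of_real c"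
    "complex_of_real (sqrt 2)"
  proof
    show "A \<in> carrier_mat (n + 2) (n + 2)" "B \<in> carrier_mat (n + 1) (n + 1)"
      using svb_mat_carrier[of k r P E] svb_mat_carrier[of "k + 1" r P' E'] dims
      by (simp_all add: A_def B_def)
    show "complex_of_real (sqrt 2) * complex_of_real (sqrt 2) = 2"
      by (simp flip: of_real_mult)
    show "A $$ (0, 0) = complex_of_real (P k)" "A $$ (1, 1) = complex_of_real (P k)"
      "A $$ (0, 1) = complex_of_real c" "A $$ (1, 0) = complex_of_real c"
      "B $$ (0, 0) = complex_of_real (P k) + complex_of_real c"
      using twin_weight merged_weight by (simp_all add: A B index_svb_mat dims c_def)
  next
    fix j assume j: "2 \<le> j" "j < n + 2"
    then have "k + 1 < k + j" "k + j \<le> r" using \<open>k < r\<close> by (simp_all add: n_def)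
    then show "A $$ (1, j) = A $$ (0, j)" "A $$ (j, 0) = A $$ (0, j)" "A $$ (j, 1) = A $$ (0, j)"
      "B $$ (0, j - 1) = complex_of_real (sqrt 2) * A $$ (0, j)"
      "B $$ (j - 1, 0) = complex_of_real (sqrt 2) * A $$ (0, j)"
      using j twin_edges merged_edges by (auto simp: A B index_svb_mat dims)
  next
    fix i j assume "2 \<le> i" "i < n + 2" "2 \<le> j" "j < n + 2"
    moreover have "k + i \<le> r" "k + j \<le> r" using calculation \<open>k < r\<close> by (simp_all add: n_def)
    ultimately show "B $$ (i - 1, j - 1) = A $$ (i, j)"
      using weights_unchanged edges_unchanged by (auto simp: A B index_svb_mat dims)
  qed
  from proots_char_poly_eq show ?thesis
    by (simp add: Spec_def A_def B_def)
qed

lemma mod_4_cases: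
  fixes k :: nat
  obtains "k mod 4 = 0" "(k + 1) mod 4 = 1" "even k"
    | "k mod 4 = 1" "(k + 1) mod 4 = 2" "odd k"
    | "k mod 4 = 2" "(k + 1) mod 4 = 3" "even k"
    | "k mod 4 = 3" "(k + 1) mod 4 = 0" "odd k"
proof -
  have mod: "(k + 1) mod 4 = (k mod 4 + 1) mod 4" and parity: "even k \<longleftrightarrow> even (k mod 4)"
    by (simp_all add: mod_simps even_mod_4_div_2 flip: dvd_mod_iff)
  have "k mod 4 < 4" by simp
  then consider "k mod 4 = 0" | "k mod 4 = 1" | "k mod 4 = 2" | "k mod 4 = 3" by linarith
  then show thesis by cases (use mod parity that in simp_all)
qed

definition base_weight :: "real \<Rightarrow> nat \<Rightarrow> real" where
  "base_weight lam s = (if s mod 4 = 1 \<or> s mod 4 = 2 then 0 else lam)"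

(* The weight that (iii) prescribes for the edge v_(j-1) v_j joining the twins of step j - 1. *)
definition twin_edge :: "real \<Rightarrow> nat \<Rightarrow> real" where
  "twin_edge lam j = (if even j then (real (j mod 4) - 1) * lam else 0)"

definition stage_weight :: "real \<Rightarrow> nat \<Rightarrow> nat \<Rightarrow> real" where
  "stage_weight lam m s =
    (if s = m then base_weight lam m + twin_edge lam m else base_weight lam s)"

(* Common weight of the edges from v_1, ..., v_i to v_j in T_1; each merge multiplies it by
   sqrt 2.  It is normalised so that after k - 1 merges the twin edge v_k v_(k+1) has the weight
   twin_edge, and after i - 1 merges the row of v_i agrees with the prescribed row of v_(i+1). *)
definition column_weight :: "real \<Rightarrow> nat \<Rightarrow> (nat \<Rightarrow> nat \<Rightarrow> real) \<Rightarrow> nat \<Rightarrow> real" where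
  "column_weight lam i e0 j =
    (if i + 1 < j then e0 (i + 1) j / sqrt 2 ^ (i - 1) else twin_edge lam j / sqrt 2 ^ (j - 2))"

(* Edge weights of T_m. *)
definition stage_edge :: "real \<Rightarrow> nat \<Rightarrow> (nat \<Rightarrow> nat \<Rightarrow> real) \<Rightarrow> nat \<Rightarrow> nat \<Rightarrow> nat \<Rightarrow> real" where
  "stage_edge lam i e0 m s j =
    (if s = m then sqrt 2 ^ (m - 1) * column_weight lam i e0 j
     else if s \<le> i then sqrt 2 ^ (s - 2) * column_weight lam i e0 j
     else e0 s j)"

lemma twin_edge_nonzero: "lam \<noteq> 0 \<Longrightarrow> even j \<Longrightarrow> twin_edge lam j \<noteq> 0"
  by (cases j rule: mod_4_cases) (simp_all add: twin_edge_def)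

lemma stage_weight_twins: "stage_weight lam k (k + 1) = stage_weight lam k k"
  by (cases k rule: mod_4_cases) (simp_all add: stage_weight_def base_weight_def twin_edge_def)

lemma stage_weight_Suc:
  "stage_weight lam (k + 1) (k + 1) = stage_weight lam k k + twin_edge lam (k + 1)"
  using stage_weight_twins[of lam k] by (simp add: stage_weight_def)

lemma stage_weight_diff_twin_edge:
  "stage_weight lam k k - twin_edge lam (k + 1) =
    (if k mod 4 = 0 then 0 else if k mod 4 = 1 then - lam
     else if k mod 4 = 2 then lam else 2 * lam)"
  by (cases k rule: mod_4_cases) (simp_all add: stage_weight_def base_weight_def twin_edge_def)

lemma svb_valid_stage_edge:
  assumes "lam \<noteq> 0" and e0: "\<And>l j. i < l \<Longrightarrow> l < j \<Longrightarrow> j \<le> r \<Longrightarrow> even j \<Longrightarrow> e0 l j \<noteq> 0"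
  shows "svb_valid m r (stage_edge lam i e0 m)"
  unfolding svb_valid_def
proof (intro allI impI)
  fix s j assume sj: "m \<le> s \<and> s < j \<and> j \<le> r \<and> even j"
  then have "column_weight lam i e0 j \<noteq> 0"
    using e0 twin_edge_nonzero[OF \<open>lam \<noteq> 0\<close>] by (simp add: column_weight_def)
  then show "stage_edge lam i e0 m s j \<noteq> 0"
    using e0 sj by (simp add: stage_edge_def)
qed

lemma stage_edge_twin_edge:
  "k \<le> i \<Longrightarrow> (if even (k + 1) then stage_edge lam i e0 k k (k + 1) else 0) = twin_edge lam (k + 1)"
  by (simp add: stage_edge_def column_weight_def twin_edge_def)

lemma stage_edge_next_row:
  assumes "1 \<le> k" "k \<le> i" "k + 1 < j" "m \<noteq> k + 1"
  shows "stage_edge lam i e0 m (k + 1) j = sqrt 2 ^ (k - 1) * column_weight lam i e0 j"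
proof (cases "k = i")
  case True
  then show ?thesis using assms by (simp add: stage_edge_def column_weight_def)
next
  case False
  then show ?thesis using assms by (simp add: stage_edge_def)
qed

lemma stage_edge_twins:
  assumes "1 \<le> k" "k \<le> i" "k + 1 < j"
  shows "stage_edge lam i e0 k k j = stage_edge lam i e0 k (k + 1) j"
  using stage_edge_next_row[OF assms, where m = k] by (simp add: stage_edge_def[of _ _ _ k k])

lemma stage_edge_merge:
  assumes "1 \<le> k" "k \<le> i" "k + 1 < j"
  shows "stage_edge lam i e0 (k + 1) (k + 1) j = sqrt 2 * stage_edge lam i e0 k (k + 1) j"
proof -
  have "stage_edge lam i e0 (k + 1) (k + 1) j =
    sqrt 2 * (sqrt 2 ^ (k - 1) * column_weight lam i e0 j)"
    using assms(1) by (simp add: stage_edge_def mult.assoc[symmetric] flip: power_Suc)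
  also have "\<dots> = sqrt 2 * stage_edge lam i e0 k (k + 1) j"
    using stage_edge_next_row[OF assms, where m = k] by simp
  finally show ?thesis .
qed

lemma Spec_stage_reduction:
  assumes "1 \<le> k" "k \<le> i" "i < r"
  shows "Spec (svb_mat k r (stage_weight lam k) (stage_edge lam i e0 k)) =
    Spec (svb_mat (k + 1) r (stage_weight lam (k + 1)) (stage_edge lam i e0 (k + 1))) +
    {# complex_of_real (stage_weight lam k k - twin_edge lam (k + 1)) #}"
proof -
  have twin_edge:
    "(if even (k + 1) then stage_edge lam i e0 k k (k + 1) else 0) = twin_edge lam (k + 1)"
    using assms(2) by (rule stage_edge_twin_edge)
  show ?thesis unfolding twin_edge[symmetric]
  proof (rule Spec_svb_mat_twin_reduction)
    show "k < r" using assms by simp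
    show "stage_weight lam k (k + 1) = stage_weight lam k k"
      by (rule stage_weight_twins)
    show "stage_weight lam (k + 1) (k + 1) =
      stage_weight lam k k + (if even (k + 1) then stage_edge lam i e0 k k (k + 1) else 0)"
      unfolding twin_edge by (rule stage_weight_Suc)
    show "stage_edge lam i e0 k k j = stage_edge lam i e0 k (k + 1) j" if "k + 1 < j" for j
      using assms(1,2) that by (rule stage_edge_twins)
    show "stage_edge lam i e0 (k + 1) (k + 1) j = sqrt 2 * stage_edge lam i e0 k (k + 1) j"
      if "k + 1 < j" for j
      using assms(1,2) that by (rule stage_edge_merge)
  qed (simp_all add: stage_weight_def stage_edge_def)
qed

theorem mainTheorem5:
  fixes lam :: real and r :: nat and p1 :: "nat \<Rightarrow> real"
  assumes lam: "lam \<noteq> 0"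
    and r: "r > 1"
    and p1: "\<And>s. p1 s = (if s mod 4 = 1 \<or> s mod 4 = 2 then 0 else lam)"
  shows "\<forall>i \<in> {1..r-1}. \<forall>e0 :: nat \<Rightarrow> nat \<Rightarrow> real.
    (\<forall>l j. i < l \<and> l < j \<and> j \<le> r \<and> even j \<longrightarrow> e0 l j \<noteq> 0) \<longrightarrow>
    (\<exists>(p :: nat \<Rightarrow> nat \<Rightarrow> real) (eps :: nat \<Rightarrow> nat \<Rightarrow> nat \<Rightarrow> real).
       (\<forall>s. p 1 s = p1 s) \<and>
       (\<forall>l j. i < l \<and> l < j \<and> j \<le> r \<and> even j \<longrightarrow> eps 1 l j = e0 l j) \<and>
       (\<forall>m \<in> {1..i+1}. svb_valid m r (eps m)) \<and>
       (\<forall>k \<in> {1..i}.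
          let epsc = (if even (k+1) then eps k k (k+1) else 0);
              xk = p k k - epsc
          in
          \<comment> \<open>(ii)\<close>
          (\<forall>j. even j \<and> k+1 < j \<and> j \<le> r \<longrightarrow> eps k k j = eps k (k+1) j) \<and>
          \<comment> \<open>(iii)\<close>
          (even (k+1) \<longrightarrow> epsc = (real ((k+1) mod 4) - 1) * lam) \<and>
          \<comment> \<open>(iv)\<close>
          p (k+1) (k+1) = p k k + epsc \<and>
          (\<forall>j. even j \<and> k+1 < j \<and> j \<le> r \<longrightarrow> eps (k+1) (k+1) j = sqrt 2 * eps k (k+1) j) \<and>
          (\<forall>z. k+1 < z \<and> z \<le> r \<longrightarrow> p (k+1) z = p k z \<and> p k z = p1 z) \<and>
          (\<forall>z j. k+1 < z \<and> z < j \<and> j \<le> r \<and> even j \<longrightarrow>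
                 eps (k+1) z j = eps k z j \<and> eps k z j = eps 1 z j) \<and>
          \<comment> \<open>(v)\<close>
          Spec (svb_mat k r (p k) (eps k)) =
            Spec (svb_mat (k+1) r (p (k+1)) (eps (k+1))) + {# complex_of_real xk #} \<and>
          xk = (if k mod 4 = 0 then 0 else if k mod 4 = 1 then - lam
                else if k mod 4 = 2 then lam else 2 * lam)))"
proof (intro ballI allI impI, goal_cases)
  case (1 i e0)
  then have i: "1 \<le> i" "i < r" using r by auto
  have e0: "\<And>l j. i < l \<Longrightarrow> l < j \<Longrightarrow> j \<le> r \<Longrightarrow> even j \<Longrightarrow> e0 l j \<noteq> 0"
    using 1(2) by blast
  have p1_eq: "p1 = base_weight lam"
    using p1 by (simp add: fun_eq_iff base_weight_def)
  show ?case
  proof (intro exI[of _ "stage_weight lam"] exI[of _ "stage_edge lam i e0"] conjI ballI, goal_cases)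
    case 1
    show ?case by (simp add: p1_eq stage_weight_def twin_edge_def)
  next
    case 2
    show ?case using i by (simp add: stage_edge_def)
  next
    case (3 m)
    show ?case using lam e0 by (rule svb_valid_stage_edge)
  next
    case (4 k)
    then have k: "1 \<le> k" "k \<le> i" by auto
    have twin:
      "(if even (k + 1) then stage_edge lam i e0 k k (k + 1) else 0) = twin_edge lam (k + 1)"
      using k(2) by (rule stage_edge_twin_edge)
    have later_rows: "stage_weight lam (k + 1) z = stage_weight lam k z"
      "stage_weight lam k z = p1 z"
      "stage_edge lam i e0 (k + 1) z j = stage_edge lam i e0 k z j"
      "stage_edge lam i e0 k z j = stage_edge lam i e0 1 z j" if "k + 1 < z" for z j
      using that k by (simp_all add: p1_eq stage_weight_def stage_edge_def)
    have "twin_edge lam (k + 1) = (real ((k + 1) mod 4) - 1) * lam" if "even (k + 1)"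
      using that by (simp add: twin_edge_def)
    then show ?case unfolding Let_def twin
      using k later_rows stage_weight_Suc[of lam k] Spec_stage_reduction[OF k \<open>i < r\<close>, of lam e0]
        stage_weight_diff_twin_edge[of lam k] stage_edge_twins[OF k, of _ lam e0]
        stage_edge_merge[OF k, of _ lam e0]
      by (auto simp del: of_real_diff)
  qed
qed

end
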